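(* Let $n\ge 2$. For every $c>0$ the quintuple $\big((z(n)+1)c,\;k(n)c,\;c,\;(z(n)+1)c,\;(k(n)+1)c\big)$ belongs to $\mathcal{C}$, and $$G\big((z(n)+1)c,k(n)c,c,(z(n)+1)c,(k(n)+1)c\big)=\widetilde G(n):=\frac{4}{(k(n)+1)^2}\Big(1+\frac{1}{z(n)}\Big).$$ In particular $\sup_{(a,b,c,d,\theta)\in\mathcal{C}}G(a,b,c,d,\theta)\ge \widetilde G(n)$.
   Context: A quintuple $(a,b,c,d,\theta)$ is admissible if $d\ge a>c>0$, $\theta>b\ge 0$, and $(a-c)^2\theta^2-a(\theta-b)\big[(2\theta+na)(a-c)+a(n-1)(\theta-b)\big]\ge 0$; $\mathcal{C}$ is the set of admissible quintuples. For $(a,b,c,d,\theta)\in\mathcal{C}$, $G=\min\{G_1,G_2\}$ with $G_1=\frac{4d(\theta-b)}{\theta^2}$ and $G_2$ the unique positive root $x$ of $(d-a)\theta^2x^2+(d-c)\theta^2x-4cd(\theta-b)=0$. Further, $k(n)=3\sqrt{n}\cos\big(\tfrac13\arccos(1/\sqrt n)\big)$ and $z(n)=\dfrac{k(n)^2-3n+\sqrt{k(n)^4-6nk(n)^2-6nk(n)}}{3n}$. *)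

theory Defs
  imports Complex_Main "HOL-Library.Extended_Real"
begin

type_synonym quint = "real \<times> real \<times> real \<times> real \<times> real"

definition admissible :: "nat \<Rightarrow> quint \<Rightarrow> bool" where
  "admissible n q = (case q of (a, b, c, d, \<theta>) \<Rightarrow>
     d \<ge> a \<and> a > c \<and> c > 0 \<and> \<theta> > b \<and> b \<ge> 0 \<and>
     (a - c)^2 * \<theta>^2 - a * (\<theta> - b) * ((2 * \<theta> + real n * a) * (a - c)
        + a * (real n - 1) * (\<theta> - b)) \<ge> 0)"

definition admC :: "nat \<Rightarrow> quint set" where
  "admC n = {q. admissible n q}"

definition G1 :: "quint \<Rightarrow> real" where
  "G1 q = (case q of (a, b, c, d, \<theta>) \<Rightarrow> 4 * d * (\<theta> - b) / \<theta>^2)"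

definition G2 :: "quint \<Rightarrow> real" where
  "G2 q = (case q of (a, b, c, d, \<theta>) \<Rightarrow>
     (THE x. x > 0 \<and> (d - a) * \<theta>^2 * x^2 + (d - c) * \<theta>^2 * x - 4 * c * d * (\<theta> - b) = 0))"

definition G :: "quint \<Rightarrow> real" where
  "G q = min (G1 q) (G2 q)"

definition kfun :: "nat \<Rightarrow> real" where
  "kfun n = 3 * sqrt (real n) * cos (arccos (1 / sqrt (real n)) / 3)"

definition zfun :: "nat \<Rightarrow> real" where
  "zfun n = (kfun n ^ 2 - 3 * real n
     + sqrt (kfun n ^ 4 - 6 * real n * kfun n ^ 2 - 6 * real n * kfun n)) / (3 * real n)"

definition Gtilde :: "nat \<Rightarrow> real" where
  "Gtilde n = 4 / (kfun n + 1)^2 * (1 + 1 / zfun n)"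

end

theory Submission
  imports Defs
begin

text \<open>By the triple-angle formula, \<open>k = k(n)\<close> is the positive root of \<open>4k\<^sup>3 = 27n(k + 1)\<close>.
  This cubic makes the discriminant in \<open>z(n)\<close> a perfect square, giving \<open>z(n) = 2 + 3/k\<close>,
  and then the admissibility polynomial of the quintuple vanishes identically: the quintuple
  lies on the boundary of \<open>\<C>\<close>. All quantities are homogeneous, so one may take \<open>c = 1\<close>.
  Since \<open>d = a\<close>, the quadratic defining \<open>G\<^sub>2\<close> degenerates to a linear equation, and
  \<open>G\<^sub>2 = G\<^sub>1 / z(n) \<le> G\<^sub>1\<close>.\<close>

lemma kfun_pos_cubic:
  assumes "n \<ge> 1"
  shows "kfun n > 0 \<and> 4 * kfun n ^ 3 = 27 * real n * (kfun n + 1)"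
proof -
  define t where "t = arccos (1 / sqrt (real n)) / 3"
  have sn: "sqrt (real n) \<ge> 1" using assms by simp
  have y0: "0 \<le> 1 / sqrt (real n)" and y1: "1 / sqrt (real n) \<le> 1" using sn by auto
  have "0 \<le> t" unfolding t_def using arccos_lbound[of "1 / sqrt (real n)"] y0 y1 by simp
  moreover have "t \<le> pi / 6" unfolding t_def using arccos_le_pi2[OF y0 y1] by simp
  ultimately have cos_pos: "cos t > 0" using pi_gt_zero by (intro cos_gt_zero_pi) linarith+
  have k: "kfun n = 3 * sqrt (real n) * cos t" unfolding kfun_def t_def by simp
  have "-1 \<le> 1 / sqrt (real n)" using y0 by linarith
  then have "cos (3 * t) = 1 / sqrt (real n)" unfolding t_def using cos_arccos y1 by simp
  hence treble: "4 * cos t ^ 3 - 3 * cos t = 1 / sqrt (real n)" by (simp add: cos_treble_cos)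
  have sq: "sqrt (real n) ^ 2 = real n" by simp
  have "4 * kfun n ^ 3 = 27 * sqrt (real n) ^ 2 * sqrt (real n) * (4 * cos t ^ 3)"
    unfolding k by (simp add: power_mult_distrib power3_eq_cube)
  also have "\<dots> = 27 * sqrt (real n) ^ 2 * sqrt (real n) * (3 * cos t + 1 / sqrt (real n))"
    using treble by simp
  also have "\<dots> = 27 * real n * (kfun n + 1)"
    unfolding k sq using sn by (simp add: field_simps)
  finally show ?thesis using k cos_pos sn by simp
qed

lemma zfun_eq:
  assumes "n \<ge> 1"
  shows "zfun n = 2 + 3 / kfun n"
proof -
  define k N where "k = kfun n" and "N = real n"
  have k_pos: "k > 0" and cubic: "4 * k ^ 3 = 27 * N * (k + 1)"
    using kfun_pos_cubic[OF assms] unfolding k_def N_def by auto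
  have N_pos: "N > 0" using assms unfolding N_def by simp
  have "(k ^ 4 - 6 * N * k ^ 2 - 6 * N * k) * (16 * k ^ 2)
      = (4 * k ^ 3) ^ 2 - 24 * N * k * (4 * k ^ 3) - 24 * N * (4 * k ^ 3)"
    by (simp add: algebra_simps power2_eq_square power3_eq_cube power4_eq_xxxx)
  also have "\<dots> = (9 * N * (k + 1)) ^ 2"
    unfolding cubic by (simp add: algebra_simps power2_eq_square)
  finally have "k ^ 4 - 6 * N * k ^ 2 - 6 * N * k = (9 * N * (k + 1) / (4 * k)) ^ 2"
    using k_pos by (simp add: field_simps power2_eq_square)
  hence discr: "sqrt (k ^ 4 - 6 * N * k ^ 2 - 6 * N * k) = 9 * N * (k + 1) / (4 * k)"
    using k_pos N_pos by simp
  have "zfun n = (k ^ 2 - 3 * N + 9 * N * (k + 1) / (4 * k)) / (3 * N)"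
    unfolding zfun_def discr[unfolded k_def N_def] k_def N_def by simp
  also have "\<dots> = (4 * k ^ 3 - 12 * N * k + 9 * N * (k + 1)) / (12 * N * k)"
    using k_pos N_pos by (simp add: field_simps power2_eq_square power3_eq_cube)
  also have "\<dots> = 2 + 3 / k"
    unfolding cubic using k_pos N_pos by (simp add: field_simps)
  finally show ?thesis unfolding k_def .
qed

lemma admissibility_polynomial_vanishes:
  assumes "n \<ge> 1"
  defines "k \<equiv> kfun n" and "z \<equiv> zfun n"
  shows "z ^ 2 * (k + 1) ^ 2
       = (z + 1) * ((2 * (k + 1) + real n * (z + 1)) * z + (z + 1) * (real n - 1))"
proof -
  have k_pos: "k > 0" and cubic: "4 * k ^ 3 = 27 * real n * (k + 1)"
    using kfun_pos_cubic[OF assms(1)] unfolding k_def by auto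
  have zk: "z * k = 2 * k + 3"
    using zfun_eq[OF assms(1)] k_pos unfolding z_def k_def by (simp add: field_simps)
  have "k ^ 3 * (z ^ 2 * (k + 1) ^ 2
         - (z + 1) * ((2 * (k + 1) + real n * (z + 1)) * z + (z + 1) * (real n - 1)))
      = - real n * (z * k) ^ 3 + (k ^ 2 - 3 * real n) * (z * k) ^ 2 * k
        - (2 * k + 3 * real n) * (z * k) * k ^ 2 - (real n - 1) * k ^ 3"
    by (simp add: algebra_simps power2_eq_square power3_eq_cube)
  also have "\<dots> = (k + 1) ^ 2 * (4 * k ^ 3 - 27 * real n * (k + 1))"
    unfolding zk by (simp add: algebra_simps power2_eq_square power3_eq_cube)
  finally show ?thesis using k_pos cubic by simp
qed

lemma admissible_scale:
  assumes "s > 0"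
  shows "admissible n (a * s, b * s, c * s, d * s, \<theta> * s) = admissible n (a, b, c, d, \<theta>)"
proof -
  have homogeneous: "(a * s - c * s) ^ 2 * (\<theta> * s) ^ 2 - a * s * (\<theta> * s - b * s) *
          ((2 * (\<theta> * s) + real n * (a * s)) * (a * s - c * s)
           + a * s * (real n - 1) * (\<theta> * s - b * s))
      = s ^ 4 * ((a - c) ^ 2 * \<theta> ^ 2 - a * (\<theta> - b) *
          ((2 * \<theta> + real n * a) * (a - c) + a * (real n - 1) * (\<theta> - b)))"
    by (simp add: algebra_simps power2_eq_square power4_eq_xxxx)
  show ?thesis
    unfolding admissible_def prod.case homogeneous
    using assms
    by (simp add: zero_le_mult_iff zero_less_mult_iff
        mult_le_cancel_right_pos mult_less_cancel_right_pos)
qed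

lemma G_scale:
  assumes "s > 0"
  shows "G (a * s, b * s, c * s, d * s, \<theta> * s) = G (a, b, c, d, \<theta>)"
proof -
  have "4 * (d * s) * (\<theta> * s - b * s) / (\<theta> * s) ^ 2
      = (s ^ 2 * (4 * d * (\<theta> - b))) / (s ^ 2 * \<theta> ^ 2)"
    by (simp add: algebra_simps power2_eq_square)
  then have "G1 (a * s, b * s, c * s, d * s, \<theta> * s) = G1 (a, b, c, d, \<theta>)"
    unfolding G1_def using assms by simp
  moreover have "(d * s - a * s) * (\<theta> * s) ^ 2 * x ^ 2 + (d * s - c * s) * (\<theta> * s) ^ 2 * x
                  - 4 * (c * s) * (d * s) * (\<theta> * s - b * s) = 0
             \<longleftrightarrow> (d - a) * \<theta> ^ 2 * x ^ 2 + (d - c) * \<theta> ^ 2 * x - 4 * c * d * (\<theta> - b) = 0"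
    for x
  proof -
    have "(d * s - a * s) * (\<theta> * s) ^ 2 * x ^ 2 + (d * s - c * s) * (\<theta> * s) ^ 2 * x
            - 4 * (c * s) * (d * s) * (\<theta> * s - b * s)
        = s ^ 3 * ((d - a) * \<theta> ^ 2 * x ^ 2 + (d - c) * \<theta> ^ 2 * x - 4 * c * d * (\<theta> - b))"
      by (simp add: algebra_simps power2_eq_square power3_eq_cube)
    then show ?thesis using assms by simp
  qed
  then have "G2 (a * s, b * s, c * s, d * s, \<theta> * s) = G2 (a, b, c, d, \<theta>)"
    unfolding G2_def prod.case by (simp only:)
  ultimately show ?thesis unfolding G_def by simp
qed

lemma G2_diagonal:
  assumes "a > c" and "c > 0" and "\<theta> > b" and "b \<ge> 0"
  shows "G2 (a, b, c, a, \<theta>) = 4 * c * a * (\<theta> - b) / ((a - c) * \<theta> ^ 2)"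
proof -
  define D R where "D = (a - c) * \<theta> ^ 2" and "R = 4 * c * a * (\<theta> - b)"
  have "D > 0" and "R > 0" using assms unfolding D_def R_def by simp_all
  then have root_iff: "(a - a) * \<theta> ^ 2 * x ^ 2 + D * x - R = 0 \<longleftrightarrow> x = R / D" for x
    by (simp add: field_simps)
  have root_pos: "R / D > 0" using \<open>D > 0\<close> \<open>R > 0\<close> by simp
  show ?thesis
    unfolding G2_def prod.case D_def[symmetric] R_def[symmetric]
    by (rule the_equality) (use root_iff root_pos in blast)+
qed

lemma boundary_quintuple:
  assumes "n \<ge> 1"
  defines "k \<equiv> kfun n" and "z \<equiv> zfun n"
  shows "admissible n (z + 1, k, 1, z + 1, k + 1)"
    and "G (z + 1, k, 1, z + 1, k + 1) = Gtilde n"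
proof -
  have k_pos: "k > 0" using kfun_pos_cubic[OF assms(1)] unfolding k_def by simp
  have z_gt_1: "z > 1"
    using zfun_eq[OF assms(1)] k_pos unfolding z_def k_def by (simp add: add_pos_pos)
  show "admissible n (z + 1, k, 1, z + 1, k + 1)"
    using admissibility_polynomial_vanishes[OF assms(1)] k_pos z_gt_1
    unfolding admissible_def k_def z_def by simp
  have G1_eq: "G1 (z + 1, k, 1, z + 1, k + 1) = 4 * (z + 1) / (k + 1) ^ 2"
    unfolding G1_def by simp
  have G2_eq: "G2 (z + 1, k, 1, z + 1, k + 1) = 4 / (k + 1) ^ 2 * (1 + 1 / z)"
    using G2_diagonal[of 1 "z + 1" k "k + 1"] k_pos z_gt_1 by (simp add: field_simps)
  have "4 / (k + 1) ^ 2 * (1 + 1 / z) \<le> 4 * (z + 1) / (k + 1) ^ 2"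
    using k_pos z_gt_1 less_1_mult[OF z_gt_1 z_gt_1] by (simp add: field_simps)
  then have "G (z + 1, k, 1, z + 1, k + 1) = 4 / (k + 1) ^ 2 * (1 + 1 / z)"
    unfolding G_def G1_eq G2_eq by simp
  then show "G (z + 1, k, 1, z + 1, k + 1) = Gtilde n"
    unfolding Gtilde_def k_def z_def .
qed

theorem proposition1p6:
  fixes n :: nat and c :: real
  assumes "n \<ge> 2" and "c > 0"
  shows "((zfun n + 1) * c, kfun n * c, c, (zfun n + 1) * c, (kfun n + 1) * c) \<in> admC n
       \<and> G ((zfun n + 1) * c, kfun n * c, c, (zfun n + 1) * c, (kfun n + 1) * c) = Gtilde n
       \<and> (SUP q\<in>admC n. ereal (G q)) \<ge> ereal (Gtilde n)"
proof -
  let ?q = "((zfun n + 1) * c, kfun n * c, c, (zfun n + 1) * c, (kfun n + 1) * c)"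
  have n: "n \<ge> 1" using assms(1) by simp
  have adm: "?q \<in> admC n"
    using boundary_quintuple(1)[OF n]
      admissible_scale[OF assms(2), of n "zfun n + 1" "kfun n" 1 "zfun n + 1" "kfun n + 1"]
    unfolding admC_def by simp
  have G_q: "G ?q = Gtilde n"
    using boundary_quintuple(2)[OF n]
      G_scale[OF assms(2), of "zfun n + 1" "kfun n" 1 "zfun n + 1" "kfun n + 1"] by simp
  have "ereal (Gtilde n) \<le> (SUP q\<in>admC n. ereal (G q))"
    using SUP_upper[OF adm, of "\<lambda>q. ereal (G q)"] G_q by simp
  then show ?thesis using adm G_q by simp
qed

end
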